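(* In the setting below, for any $\varepsilon>0$ and $\theta\in\mathbb{R}$, PrivTree$(D,\lambda,\theta,\delta)$ satisfies $\varepsilon$-differential privacy if $\lambda\ge\frac{2\beta-1}{\beta-1}\cdot\frac{1}{\varepsilon}$ and $\delta=\lambda\ln\beta$, where $\beta\ge 2$ is the fanout of the splitting scheme.
   Context: $\mathrm{Lap}(\lambda)$ is the Laplace distribution with density $\frac{1}{2\lambda}e^{-|y|/\lambda}$. Setting: $\Omega$ is a domain and there is a fixed, data-independent hierarchical splitting scheme of fanout $\beta\ge 2$: an infinite rooted tree of candidate nodes in which every node $v$ has exactly $\beta$ children, each node $v$ carries a sub-domain $\mathrm{dom}(v)\subseteq\Omega$, the root $v_1$ has $\mathrm{dom}(v_1)=\Omega$, and the sub-domains of the $\beta$ children of $v$ partition $\mathrm{dom}(v)$. $\mathrm{depth}(v)$ is the hop distance from $v$ to the root. A dataset $D$ is a finite multiset of points of $\Omega$; $c(v)$ is the number of points of $D$ lying in $\mathrm{dom}(v)$. PrivTree$(D,\lambda,\theta,\delta)$: start with the tree consisting only of the root, marked unvisited. While some node $v$ is unvisited: mark $v$ visited; set $b(v)=\max\{\theta-\delta,\ c(v)-\mathrm{depth}(v)\cdot\delta\}$; set $\hat b(v)=b(v)+\eta_v$ with $\eta_v\sim\mathrm{Lap}(\lambda)$ fresh and independent; if $\hat b(v)>\theta$, add all $\beta$ children of $v$ as unvisited nodes. The output is the resulting tree (nodes with sub-domains), with all counts removed. Two datasets are neighboring if one is obtained from the other by inserting one point. An algorithm $\mathcal{A}$ is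 $\varepsilon$-differentially private if for all neighboring $D,D'$ and every possible output $O$, $\ln\big(\Pr[\mathcal{A}(D)=O]/\Pr[\mathcal{A}(D')=O]\big)\le\varepsilon$. *)

theory Defs
  imports "HOL-Probability.Probability"
begin

definition laplace_density :: "real \<Rightarrow> real \<Rightarrow> real" where
  "laplace_density lam y = exp (- \<bar>y\<bar> / lam) / (2 * lam)"

definition laplace :: "real \<Rightarrow> real measure" where
  "laplace lam = density lborel (\<lambda>y. ennreal (laplace_density lam y))"

text \<open>Candidate nodes of the infinite beta-ary tree: lists over {0..<beta}; the root is [],
  the children of v are v @ [i] for i < beta, and depth v = length v.\<close>
definition cand_nodes :: "nat \<Rightarrow> nat list set" where
  "cand_nodes \<beta> = {v. set v \<subseteq> {..<\<beta>}}"

definition splitting_scheme :: "'a set \<Rightarrow> nat \<Rightarrow> (nat list \<Rightarrow> 'a set) \<Rightarrow> bool" where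
  "splitting_scheme \<Omega> \<beta> dm \<longleftrightarrow> 2 \<le> \<beta> \<and> dm [] = \<Omega> \<and>
     (\<forall>v \<in> cand_nodes \<beta>. (\<Union>i<\<beta>. dm (v @ [i])) = dm v \<and>
        (\<forall>i<\<beta>. \<forall>j<\<beta>. i \<noteq> j \<longrightarrow> dm (v @ [i]) \<inter> dm (v @ [j]) = {}))"

definition node_count :: "(nat list \<Rightarrow> 'a set) \<Rightarrow> 'a multiset \<Rightarrow> nat list \<Rightarrow> nat" where
  "node_count dm D v = size (filter_mset (\<lambda>p. p \<in> dm v) D)"

definition biased_count ::
  "(nat list \<Rightarrow> 'a set) \<Rightarrow> 'a multiset \<Rightarrow> real \<Rightarrow> real \<Rightarrow> nat list \<Rightarrow> real" where
  "biased_count dm D \<theta> \<delta> v = max (\<theta> - \<delta>) (real (node_count dm D v) - real (length v) * \<delta>)"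

text \<open>The tree output by PrivTree when node v receives noise eta v: a candidate node is
  in the tree iff every proper ancestor u was split, i.e. b(u) + eta u > theta.\<close>
definition privtree_output ::
  "nat \<Rightarrow> (nat list \<Rightarrow> 'a set) \<Rightarrow> 'a multiset \<Rightarrow> real \<Rightarrow> real \<Rightarrow> (nat list \<Rightarrow> real) \<Rightarrow> nat list set" where
  "privtree_output \<beta> dm D \<theta> \<delta> \<eta> =
     {v \<in> cand_nodes \<beta>. \<forall>k < length v. biased_count dm D \<theta> \<delta> (take k v) + \<eta> (take k v) > \<theta>}"

definition noise_space :: "real \<Rightarrow> (nat list \<Rightarrow> real) measure" where
  "noise_space lam = PiM UNIV (\<lambda>_. laplace lam)"

definition privtree_prob ::
  "nat \<Rightarrow> (nat list \<Rightarrow> 'a set) \<Rightarrow> 'a multiset \<Rightarrow> real \<Rightarrow> real \<Rightarrow> real \<Rightarrow> nat list set \<Rightarrow> real" where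
  "privtree_prob \<beta> dm D lam \<theta> \<delta> T =
     measure (noise_space lam) {\<eta> \<in> space (noise_space lam). privtree_output \<beta> dm D \<theta> \<delta> \<eta> = T}"

end

theory Submission
  imports Defs "HOL-Real_Asymp.Real_Asymp"
begin

text \<open>The probability of an output tree \<open>T\<close> is the limit of products, over the nodes of \<open>T\<close>,
  of the probability that the noisy biased count falls on the side of the threshold prescribed by
  \<open>T\<close>. Inserting a point \<open>x\<close> raises by one the counts of exactly the nodes whose domain contains
  \<open>x\<close>, and these lie on one root path. Along it the log-ratio of split probabilities at a node is
  an integral of the Laplace hazard rate, which is at most \<open>1 / lam\<close> and decays like
  \<open>exp (t / lam)\<close> below the threshold. As the biased counts drop by \<open>\<delta> = lam * ln \<beta>\<close> per
  level, at each point of integration at most two nodes contribute \<open>1 / lam\<close> and the others a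
  geometric series of ratio \<open>1 / \<beta>\<close>, for a total of \<open>(2 + 1 / (\<beta> - 1)) / lam \<le> \<epsilon>\<close>.
  Conversely, removing \<open>x\<close> only lowers the likelihood at the single leaf of \<open>T\<close> containing
  \<open>x\<close>, by a factor at most \<open>exp (1 / lam)\<close>.\<close>

definition laplace_tail :: "real \<Rightarrow> real \<Rightarrow> real" where
  "laplace_tail lam t = (if 0 \<le> t then exp (- t / lam) / 2 else 1 - exp (t / lam) / 2)"

lemma laplace_tail_nonpos: "t \<le> 0 \<Longrightarrow> laplace_tail lam t = 1 - exp (t / lam) / 2"
  by (auto simp: laplace_tail_def)

lemma laplace_tail_pos:
  assumes "lam > 0" shows "0 < laplace_tail lam t"
proof (cases "0 \<le> t")
  case False
  then have "exp (t / lam) < 1" using assms by (simp add: divide_neg_pos)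
  then show ?thesis using laplace_tail_nonpos[of t lam] False by linarith
qed (simp add: laplace_tail_def)

lemma laplace_tail_less_1:
  assumes "lam > 0" shows "laplace_tail lam t < 1"
proof (cases "0 \<le> t")
  case True
  then have "exp (- t / lam) \<le> 1" using assms by (simp add: divide_nonpos_pos)
  moreover have "laplace_tail lam t = exp (- t / lam) / 2" using True by (simp add: laplace_tail_def)
  ultimately show ?thesis by linarith
qed (simp add: laplace_tail_def)

lemma laplace_tail_antimono:
  assumes "lam > 0" and "a \<le> b" shows "laplace_tail lam b \<le> laplace_tail lam a"
proof (cases "0 \<le> a")
  case True
  then show ?thesis using assms by (simp add: laplace_tail_def divide_right_mono)
next
  case a: False
  show ?thesis
  proof (cases "0 \<le> b")
    case True
    have "exp (- b / lam) \<le> 1" "exp (a / lam) \<le> 1"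
      using True a assms(1) by (simp_all add: divide_nonpos_pos)
    moreover have "laplace_tail lam a = 1 - exp (a / lam) / 2" "laplace_tail lam b = exp (- b / lam) / 2"
      using True a by (simp_all add: laplace_tail_def)
    ultimately show ?thesis by linarith
  next
    case False
    then show ?thesis using a assms by (simp add: laplace_tail_def divide_right_mono)
  qed
qed

lemma ln_le_ratio_minus_1: "0 < (p::real) \<Longrightarrow> 0 < q \<Longrightarrow> ln p - ln q \<le> p / q - 1"
  using ln_le_minus_one[of "p / q"] by (simp add: ln_div)

definition laplace_hazard_bound :: "real \<Rightarrow> real \<Rightarrow> real" where
  "laplace_hazard_bound lam t = min 1 (exp (t / lam)) / lam"

lemma ln_laplace_tail_diff_nonneg:
  assumes "0 \<le> a" and "a \<le> b"
  shows "ln (laplace_tail lam a) - ln (laplace_tail lam b) = (b - a) / lam"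
  using assms by (simp add: laplace_tail_def ln_div diff_divide_distrib)

lemma ln_laplace_tail_diff_nonpos:
  assumes l: "lam > 0" and ab: "a \<le> b" and b: "b \<le> 0"
  shows "ln (laplace_tail lam a) - ln (laplace_tail lam b) \<le> (b - a) * exp (b / lam) / lam"
proof -
  have Ga: "laplace_tail lam a = 1 - exp (a / lam) / 2" and Gb: "laplace_tail lam b = 1 - exp (b / lam) / 2"
    using ab b by (simp_all add: laplace_tail_nonpos)
  have half: "1 / 2 \<le> laplace_tail lam b" using Gb b l by (simp add: divide_nonpos_pos)
  have gap: "0 \<le> exp (b / lam) - exp (a / lam)" using ab l by (simp add: divide_right_mono)
  have "ln (laplace_tail lam a) - ln (laplace_tail lam b) \<le> laplace_tail lam a / laplace_tail lam b - 1"
    using laplace_tail_pos[OF l] by (intro ln_le_ratio_minus_1)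
  also have "\<dots> = (exp (b / lam) - exp (a / lam)) / (2 * laplace_tail lam b)"
    using laplace_tail_pos[OF l, of b] by (simp add: Ga Gb field_simps)
  also have "\<dots> \<le> (exp (b / lam) - exp (a / lam)) / 1"
    using gap half by (intro divide_left_mono) auto
  also have "\<dots> = exp (b / lam) * (1 - exp (- ((b - a) / lam)))"
    by (simp add: algebra_simps diff_divide_distrib exp_diff)
  also have "\<dots> \<le> exp (b / lam) * ((b - a) / lam)"
    using exp_ge_add_one_self[of "- ((b - a) / lam)"] by (intro mult_left_mono) auto
  finally show ?thesis by (simp add: field_simps)
qed

text \<open>The one-step form of \<open>-(ln G)' \<le> H\<close> for the tail \<open>G\<close> and the hazard bound \<open>H\<close>.\<close>
lemma ln_laplace_tail_diff_le:
  assumes l: "lam > 0" and ab: "a \<le> b"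
  shows "ln (laplace_tail lam a) - ln (laplace_tail lam b) \<le> (b - a) * laplace_hazard_bound lam b"
proof (cases "0 \<le> b")
  case b: True
  have "ln (laplace_tail lam a) - ln (laplace_tail lam b) \<le> (b - a) / lam"
  proof (cases "0 \<le> a")
    case True
    then show ?thesis using ln_laplace_tail_diff_nonneg[OF True ab] by simp
  next
    case False
    have "ln (laplace_tail lam a) - ln (laplace_tail lam 0) \<le> (0 - a) * exp (0 / lam) / lam"
      using False by (intro ln_laplace_tail_diff_nonpos[OF l]) auto
    then show ?thesis using ln_laplace_tail_diff_nonneg[OF order_refl b, of lam]
      by (simp add: diff_divide_distrib)
  qed
  moreover have "laplace_hazard_bound lam b = 1 / lam"
    using b l by (simp add: laplace_hazard_bound_def)
  ultimately show ?thesis by simp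
next
  case False
  then have "exp (b / lam) \<le> 1" using l by (simp add: divide_nonpos_pos)
  then have "laplace_hazard_bound lam b = exp (b / lam) / lam"
    by (simp add: laplace_hazard_bound_def min_def)
  then show ?thesis using ln_laplace_tail_diff_nonpos[OF l ab] False by simp
qed

lemma laplace_cdf_shift_nonneg:
  assumes l: "lam > 0" and "0 \<le> a" and ab: "a \<le> b"
  shows "1 - laplace_tail lam b \<le> exp ((b - a) / lam) * (1 - laplace_tail lam a)"
proof -
  define p where "p = exp (- a / lam)"
  define q where "q = exp ((b - a) / lam)"
  have p: "0 < p" "p \<le> 1" unfolding p_def using assms by (auto simp: divide_nonpos_pos)
  have q: "1 \<le> q" unfolding q_def using ab l by simp
  have "exp (- b / lam) = p / q"
    unfolding p_def q_def by (simp add: exp_diff[symmetric] diff_divide_distrib)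
  moreover have "1 - p / (2 * q) \<le> q * (1 - p / 2)"
  proof -
    have "(p / 2) * (q + 1) \<le> (1 / 2) * (q + 1)" using p q by (intro mult_right_mono) auto
    then have "0 \<le> q - (p / 2) * (q + 1)" using q by (simp add: field_simps)
    then have "0 \<le> (q - 1) * (q - (p / 2) * (q + 1))" using q by simp
    moreover have "(q - 1) * (q - (p / 2) * (q + 1)) = q * (q * (1 - p / 2)) - (q - p / 2)"
      by (simp add: field_simps)
    ultimately show ?thesis using q by (simp add: field_simps)
  qed
  ultimately show ?thesis using assms unfolding q_def p_def by (simp add: laplace_tail_def)
qed

lemma laplace_cdf_shift_le:
  assumes l: "lam > 0" and ab: "a \<le> b" and b: "b \<le> a + 1"
  shows "1 - laplace_tail lam b \<le> exp (1 / lam) * (1 - laplace_tail lam a)"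
proof -
  have shift: "1 - laplace_tail lam b \<le> exp ((b - a) / lam) * (1 - laplace_tail lam a)"
  proof (cases "0 \<le> a")
    case True then show ?thesis by (rule laplace_cdf_shift_nonneg[OF l _ ab])
  next
    case a: False
    show ?thesis
    proof (cases "0 \<le> b")
      case True
      have "2 \<le> exp (b / lam) + exp (- b / lam)"
        using exp_ge_add_one_self[of "b / lam"] exp_ge_add_one_self[of "- b / lam"] by linarith
      then show ?thesis using a True
        by (simp add: laplace_tail_def exp_diff diff_divide_distrib)
    next
      case False
      then show ?thesis using a
        by (simp add: laplace_tail_nonpos exp_diff diff_divide_distrib)
    qed
  qed
  have "exp ((b - a) / lam) \<le> exp (1 / lam)" using b l by (simp add: divide_right_mono)
  then have "exp ((b - a) / lam) * (1 - laplace_tail lam a) \<le> exp (1 / lam) * (1 - laplace_tail lam a)"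
    using laplace_tail_less_1[OF l, of a] by (intro mult_right_mono) auto
  with shift show ?thesis by linarith
qed

lemma DERIV_glue:
  fixes f g k :: "real \<Rightarrow> real"
  assumes g: "DERIV g x :> D" and k: "DERIV k x :> D"
    and fg: "\<And>y. x \<le> y \<Longrightarrow> f y = g y" and fk: "\<And>y. y \<le> x \<Longrightarrow> f y = k y"
  shows "DERIV f x :> D"
proof -
  have "(f has_field_derivative D) (at x within {x..})"
    using has_field_derivative_at_within[OF g]
    by (rule has_field_derivative_transform_within[where d = 1]) (use fg in auto)
  moreover have "(f has_field_derivative D) (at x within {..x})"
    using has_field_derivative_at_within[OF k]
    by (rule has_field_derivative_transform_within[where d = 1]) (use fk in auto)
  ultimately have "((\<lambda>y. (f y - f x) / (y - x)) \<longlongrightarrow> D) (at x within {..x} \<union> {x..})"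
    unfolding has_field_derivative_iff at_within_union by (intro filterlim_sup)
  moreover have "{..x} \<union> {x..} = UNIV" by auto
  ultimately show ?thesis by (simp add: has_field_derivative_iff)
qed

lemma laplace_cdf_deriv:
  assumes l: "lam > 0"
  shows "DERIV (\<lambda>y. 1 - laplace_tail lam y) y :> laplace_density lam y"
proof -
  have right: "DERIV (\<lambda>y. 1 - exp (- y / lam) / 2) y :> exp (- y / lam) / (2 * lam)" for y
    using l by (auto intro!: derivative_eq_intros simp: field_simps)
  have left: "DERIV (\<lambda>y. exp (y / lam) / 2) y :> exp (y / lam) / (2 * lam)" for y
    using l by (auto intro!: derivative_eq_intros simp: field_simps)
  have cdf_right: "1 - laplace_tail lam y = 1 - exp (- y / lam) / 2" if "0 \<le> y" for y
    using that by (simp add: laplace_tail_def)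
  have cdf_left: "1 - laplace_tail lam y = exp (y / lam) / 2" if "y \<le> 0" for y
    using that by (simp add: laplace_tail_nonpos)
  consider "y > 0" | "y < 0" | "y = 0" by linarith
  then show ?thesis
  proof cases
    case 1
    have "eventually (\<lambda>z. 1 - laplace_tail lam z = 1 - exp (- z / lam) / 2) (nhds y)"
      using eventually_nhds_in_open[of "{0<..}" y] 1 by (auto elim!: eventually_mono simp: laplace_tail_def)
    then show ?thesis using right[of y] 1
      by (subst DERIV_cong_ev[OF refl _ refl]) (auto simp: laplace_density_def)
  next
    case 2
    have "eventually (\<lambda>z. 1 - laplace_tail lam z = exp (z / lam) / 2) (nhds y)"
      using eventually_nhds_in_open[of "{..<0}" y] 2 by (auto elim!: eventually_mono simp: laplace_tail_def)
    then show ?thesis using left[of y] 2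
      by (subst DERIV_cong_ev[OF refl _ refl]) (auto simp: laplace_density_def)
  next
    case 3
    have "DERIV (\<lambda>y. 1 - laplace_tail lam y) 0 :> exp (- 0 / lam) / (2 * lam)"
      using left[of 0] by (intro DERIV_glue[OF right _ cdf_right cdf_left]) simp_all
    then show ?thesis using 3 by (simp add: laplace_density_def)
  qed
qed

lemma laplace_density_borel [measurable]: "laplace_density lam \<in> borel_measurable borel"
  unfolding laplace_density_def divide_inverse
  by (intro borel_measurable_continuous_onI continuous_intros)

lemma space_laplace [simp]: "space (laplace lam) = UNIV"
  by (simp add: laplace_def)

lemma sets_laplace [simp]: "sets (laplace lam) = sets borel"
  by (simp add: laplace_def)

lemma emeasure_laplace_atLeast:
  assumes l: "lam > 0"
  shows "emeasure (laplace lam) {a..} = ennreal (laplace_tail lam a)"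
proof -
  have tendsto_1: "((\<lambda>y. 1 - laplace_tail lam y) \<longlongrightarrow> 1) at_top"
  proof -
    have "((\<lambda>y. 1 - exp (- y / lam) / 2) \<longlongrightarrow> 1) at_top" using l by real_asymp
    moreover have "eventually (\<lambda>y. 1 - exp (- y / lam) / 2 = 1 - laplace_tail lam y) at_top"
      using eventually_ge_at_top[of "0::real"] by eventually_elim (simp add: laplace_tail_def)
    ultimately show ?thesis by (rule Lim_transform_eventually)
  qed
  have "(\<integral>\<^sup>+y. ennreal (laplace_density lam y) * indicator {a..} y \<partial>lborel) = ennreal (laplace_tail lam a)"
    using nn_integral_FTC_atLeast[OF laplace_density_borel laplace_cdf_deriv[OF l] _ tendsto_1]
      l by (simp add: laplace_density_def)
  then show ?thesis unfolding laplace_def by (subst emeasure_density) auto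
qed

lemma prob_space_laplace:
  assumes l: "lam > 0"
  shows "prob_space (laplace lam)"
proof
  let ?A = "\<lambda>n::nat. {- real n ..}"
  have "(\<lambda>n. emeasure (laplace lam) (?A n)) \<longlonglongrightarrow> emeasure (laplace lam) (\<Union>n. ?A n)"
    by (rule Lim_emeasure_incseq) (auto simp: incseq_def)
  moreover have "(\<Union>n. ?A n) = UNIV"
  proof -
    have "y \<in> (\<Union>n. ?A n)" for y :: real
    proof -
      obtain n where "- y < real n" using reals_Archimedean2 by blast
      then show ?thesis by (intro UN_I[of n]) auto
    qed
    then show ?thesis by blast
  qed
  moreover have "(\<lambda>n. emeasure (laplace lam) (?A n)) \<longlonglongrightarrow> 1"
  proof -
    have "(\<lambda>n::nat. 1 - exp (- real n / lam) / 2) \<longlonglongrightarrow> 1" using l by real_asymp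
    then have "(\<lambda>n::nat. ennreal (1 - exp (- real n / lam) / 2)) \<longlonglongrightarrow> ennreal 1"
      by (rule tendsto_ennrealI)
    moreover have "emeasure (laplace lam) (?A n) = ennreal (1 - exp (- real n / lam) / 2)" for n
      using emeasure_laplace_atLeast[OF l, of "- real n"] by (simp add: laplace_tail_nonpos)
    ultimately show ?thesis by simp
  qed
  ultimately show "emeasure (laplace lam) (space (laplace lam)) = 1"
    using LIMSEQ_unique by fastforce
qed

lemma measure_laplace_greaterThan:
  assumes l: "lam > 0"
  shows "measure (laplace lam) {a<..} = laplace_tail lam a"
proof -
  have "emeasure (laplace lam) {a<..} = emeasure (laplace lam) {a..}"
    unfolding laplace_def using AE_lborel_singleton[of a]
    by (simp add: emeasure_density, intro nn_integral_cong_AE)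
      (auto elim!: eventually_mono split: split_indicator)
  then show ?thesis
    using emeasure_laplace_atLeast[OF l] laplace_tail_pos[OF l, of a] by (simp add: measure_def)
qed

lemma measure_laplace_atMost:
  assumes l: "lam > 0"
  shows "measure (laplace lam) {..a} = 1 - laplace_tail lam a"
proof -
  interpret prob_space "laplace lam" by (rule prob_space_laplace[OF l])
  have "{..a} = space (laplace lam) - {a<..}" by auto
  then show ?thesis using prob_compl[of "{a<..}"] measure_laplace_greaterThan[OF l] by simp
qed

text \<open>For a node whose count grows by one, \<open>min d (1 - s)\<close> and \<open>min d (- s)\<close> are the distances
  from the biased count to the threshold before and after; \<open>s\<close> is the amount by which the larger
  unclamped biased count exceeds the threshold.\<close>
definition split_loss :: "real \<Rightarrow> real \<Rightarrow> real \<Rightarrow> real" where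
  "split_loss lam d s = ln (laplace_tail lam (min d (- s))) - ln (laplace_tail lam (min d (1 - s)))"

lemma split_loss_nonneg:
  assumes "lam > 0" shows "0 \<le> split_loss lam d s"
proof -
  have "laplace_tail lam (min d (1 - s)) \<le> laplace_tail lam (min d (- s))"
    using assms by (intro laplace_tail_antimono) auto
  then show ?thesis unfolding split_loss_def using laplace_tail_pos[OF assms] by simp
qed

lemma ln_laplace_tail_step_le:
  assumes l: "lam > 0" and h: "h > 0"
  shows "ln (laplace_tail lam (min d (r - s))) - ln (laplace_tail lam (min d (r + h - s)))
         \<le> h * (if r - s < d then laplace_hazard_bound lam (min d (r + h - s)) else 0)"
proof (cases "r - s < d")
  case True
  let ?a = "min d (r - s)" and ?b = "min d (r + h - s)"
  have "ln (laplace_tail lam ?a) - ln (laplace_tail lam ?b) \<le> (?b - ?a) * laplace_hazard_bound lam ?b"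
    using h by (intro ln_laplace_tail_diff_le[OF l]) auto
  also have "\<dots> \<le> h * laplace_hazard_bound lam ?b"
    using True l by (intro mult_right_mono) (auto simp: laplace_hazard_bound_def)
  finally show ?thesis using True by simp
next
  case False
  then show ?thesis using h by (simp add: min_def)
qed

definition hazard_profile :: "real \<Rightarrow> real \<Rightarrow> real \<Rightarrow> nat \<Rightarrow> real" where
  "hazard_profile lam E r j = (if j \<le> 1 then 1 else E * r ^ (j - 1)) / lam"

lemma sum_hazard_profile_le:
  assumes r: "0 \<le> r" "r < 1" and E: "E \<ge> 0" and l: "lam > 0"
  shows "(\<Sum>j<n. hazard_profile lam E r j) \<le> (2 + E * r / (1 - r)) / lam"
proof -
  have nonneg: "0 \<le> hazard_profile lam E r j" for j
    using r E l by (simp add: hazard_profile_def)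
  have geom: "(\<Sum>i<n. r ^ Suc i) \<le> r / (1 - r)"
  proof -
    have "(\<Sum>i<n. r ^ i) \<le> (\<Sum>i. r ^ i)"
      using r by (intro sum_le_suminf summable_geometric) auto
    then have "r * (\<Sum>i<n. r ^ i) \<le> r * (1 / (1 - r))"
      using r by (intro mult_left_mono) (auto simp: suminf_geometric)
    then show ?thesis by (simp add: sum_distrib_left)
  qed
  have "(\<Sum>j<n. hazard_profile lam E r j) \<le> (\<Sum>j<Suc (Suc n). hazard_profile lam E r j)"
    using nonneg by (intro sum_mono2) auto
  also have "\<dots> = (2 + E * (\<Sum>i<n. r ^ Suc i)) / lam"
    unfolding sum.lessThan_Suc_shift
    by (simp add: hazard_profile_def sum_divide_distrib sum_distrib_left add_divide_distrib)
  also have "\<dots> \<le> (2 + E * r / (1 - r)) / lam"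
    using mult_left_mono[OF geom E] l by (intro divide_right_mono) auto
  finally show ?thesis .
qed

lemma laplace_hazard_bound_le: "lam > 0 \<Longrightarrow> laplace_hazard_bound lam t \<le> 1 / lam"
  by (simp add: laplace_hazard_bound_def divide_right_mono)

lemma laplace_hazard_bound_le_exp: "lam > 0 \<Longrightarrow> laplace_hazard_bound lam t \<le> exp (t / lam) / lam"
  by (simp add: laplace_hazard_bound_def divide_right_mono)

lemma laplace_hazard_bound_below_active:
  assumes l: "lam > 0" and b: "b > 0" and d: "d = lam * ln b"
    and active: "r - y0 < d" and below: "y0 + real k * d \<le> y"
  shows "laplace_hazard_bound lam (min d (r + h - y)) \<le> hazard_profile lam (exp (h / lam)) (1 / b) k"
proof (cases "k \<le> 1")
  case True
  then show ?thesis using laplace_hazard_bound_le[OF l] by (simp add: hazard_profile_def)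
next
  case False
  define j where "j = k - 1"
  have k: "real k = real j + 1" unfolding j_def using False by simp
  have "min d (r + h - y) \<le> h - real j * d" using active below k by (simp add: algebra_simps)
  then have "exp (min d (r + h - y) / lam) / lam \<le> exp ((h - real j * d) / lam) / lam"
    using l by (simp add: divide_right_mono)
  with laplace_hazard_bound_le_exp[OF l]
  have "laplace_hazard_bound lam (min d (r + h - y)) \<le> exp ((h - real j * d) / lam) / lam"
    by (rule order_trans)
  also have "exp ((h - real j * d) / lam) = exp (h / lam) * (1 / b) ^ j"
    using l b by (simp add: d diff_divide_distrib exp_diff exp_of_nat_mult power_one_over)
  finally show ?thesis using False by (simp add: hazard_profile_def j_def)
qed

definition level_spaced :: "real \<Rightarrow> ('b \<Rightarrow> nat) \<Rightarrow> ('b \<Rightarrow> real) \<Rightarrow> 'b set \<Rightarrow> bool" where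
  "level_spaced d len x A \<longleftrightarrow>
     (\<forall>u\<in>A. \<forall>v\<in>A. len u \<le> len v \<longrightarrow> x v + real (len v - len u) * d \<le> x u)"

text \<open>Only nodes at most one level above the deepest active node contribute \<open>1 / lam\<close>; above
  those, the choice \<open>d = lam * ln b\<close> makes the contributions decay geometrically with ratio \<open>1 / b\<close>.\<close>
lemma sum_hazard_bound_active_le:
  fixes A :: "'b set" and len :: "'b \<Rightarrow> nat" and x :: "'b \<Rightarrow> real"
  assumes l: "lam > 0" and b: "b > 1" and d: "d = lam * ln b"
    and fin: "finite A" and inj: "inj_on len A" and sp: "level_spaced d len x A"
  shows "(\<Sum>u\<in>A. if r - x u < d then laplace_hazard_bound lam (min d (r + h - x u)) else 0)
          \<le> (2 + exp (h / lam) / (b - 1)) / lam"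
proof -
  define E where "E = exp (h / lam)"
  define act where "act = {u\<in>A. r - x u < d}"
  have E: "E \<ge> 0" unfolding E_def by simp
  have bound: "(2 + E * (1 / b) / (1 - 1 / b)) / lam = (2 + E / (b - 1)) / lam"
    using b by (simp add: field_simps)
  have "(\<Sum>u\<in>A. if r - x u < d then laplace_hazard_bound lam (min d (r + h - x u)) else 0)
       = (\<Sum>u\<in>act. laplace_hazard_bound lam (min d (r + h - x u)))"
    unfolding act_def using fin by (simp add: sum.inter_filter)
  also have "\<dots> \<le> (2 + E / (b - 1)) / lam"
  proof (cases "act = {}")
    case True
    then show ?thesis using E b l by simp
  next
    case False
    have fin_act: "finite act" using fin unfolding act_def by simp
    define m where "m = Max (len ` act)"
    have "m \<in> len ` act" unfolding m_def using fin_act False by simp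
    then obtain u0 where u0: "u0 \<in> act" "len u0 = m" by auto
    have le_m: "len u \<le> m" if "u \<in> act" for u unfolding m_def using fin_act that by simp
    have "(\<Sum>u\<in>act. laplace_hazard_bound lam (min d (r + h - x u)))
        \<le> (\<Sum>u\<in>act. hazard_profile lam E (1 / b) (m - len u))"
    proof (rule sum_mono)
      fix u assume u: "u \<in> act"
      have "x u0 + real (m - len u) * d \<le> x u"
        using sp u u0 le_m[OF u] unfolding level_spaced_def act_def by auto
      then show "laplace_hazard_bound lam (min d (r + h - x u)) \<le> hazard_profile lam E (1 / b) (m - len u)"
        using u0 b unfolding act_def E_def by (intro laplace_hazard_bound_below_active[OF l _ d]) auto
    qed
    also have "\<dots> = (\<Sum>j\<in>(\<lambda>u. m - len u) ` act. hazard_profile lam E (1 / b) j)"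
    proof (rule sum.reindex[symmetric, unfolded comp_def])
      show "inj_on (\<lambda>u. m - len u) act"
      proof (rule inj_onI)
        fix u v assume uv: "u \<in> act" "v \<in> act" "m - len u = m - len v"
        then have "len u = len v" using le_m by (metis diff_diff_cancel)
        then show "u = v" using inj uv unfolding act_def by (auto dest: inj_onD)
      qed
    qed
    also have "\<dots> \<le> (\<Sum>j<m + 1. hazard_profile lam E (1 / b) j)"
      using E b l by (intro sum_mono2) (auto simp: hazard_profile_def)
    also have "\<dots> \<le> (2 + E * (1 / b) / (1 - 1 / b)) / lam"
      using E b l by (intro sum_hazard_profile_le) auto
    finally show ?thesis unfolding bound .
  qed
  finally show ?thesis unfolding E_def .
qed

text \<open>\<open>split_loss lam d s\<close> is the integral over \<open>r \<in> [0, 1]\<close> of the hazard rate at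
  \<open>min d (r - s)\<close>; bounding its Riemann sums and exchanging them with the sum over the path lets
  the geometric bound be applied at each \<open>r\<close>.\<close>
lemma sum_split_loss_le_discretized:
  fixes A :: "'b set" and len :: "'b \<Rightarrow> nat" and x :: "'b \<Rightarrow> real"
  assumes l: "lam > 0" and b: "b > 1" and d: "d = lam * ln b" and n: "n > 0"
    and fin: "finite A" and inj: "inj_on len A" and sp: "level_spaced d len x A"
  shows "(\<Sum>u\<in>A. split_loss lam d (x u)) \<le> (2 + exp (1 / real n / lam) / (b - 1)) / lam"
proof -
  define h where "h = 1 / real n"
  have h: "h > 0" unfolding h_def using n by simp
  define f where "f u i = ln (laplace_tail lam (min d (real i * h - x u)))" for u i
  define C where "C = (2 + exp (h / lam) / (b - 1)) / lam"
  have telescope: "split_loss lam d (x u) = (\<Sum>i<n. f u i - f u (Suc i))" for u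
  proof -
    have "real n * h = 1" using n unfolding h_def by simp
    moreover have "(\<Sum>i<n. f u i - f u (Suc i)) = f u 0 - f u n" by (rule sum_lessThan_telescope')
    ultimately show ?thesis by (simp add: f_def split_loss_def)
  qed
  have "(\<Sum>u\<in>A. split_loss lam d (x u)) = (\<Sum>u\<in>A. \<Sum>i<n. f u i - f u (Suc i))"
    using telescope by simp
  also have "\<dots> \<le> (\<Sum>u\<in>A. \<Sum>i<n. h * (if real i * h - x u < d
        then laplace_hazard_bound lam (min d (real i * h + h - x u)) else 0))"
  proof (intro sum_mono)
    fix u i
    have "f u (Suc i) = ln (laplace_tail lam (min d (real i * h + h - x u)))"
      unfolding f_def by (simp add: distrib_right add.commute)
    then show "f u i - f u (Suc i) \<le> h * (if real i * h - x u < d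
        then laplace_hazard_bound lam (min d (real i * h + h - x u)) else 0)"
      using ln_laplace_tail_step_le[OF l h, of d "real i * h" "x u"] by (simp add: f_def)
  qed
  also have "\<dots> = (\<Sum>i<n. h * (\<Sum>u\<in>A. if real i * h - x u < d
        then laplace_hazard_bound lam (min d (real i * h + h - x u)) else 0))"
    by (subst sum.swap) (simp add: sum_distrib_left)
  also have "\<dots> \<le> (\<Sum>i<n. h * C)"
    unfolding C_def using h
    by (intro sum_mono mult_left_mono sum_hazard_bound_active_le[OF l b d fin inj sp]) auto
  also have "\<dots> = C" using n unfolding h_def by simp
  finally show ?thesis unfolding C_def h_def .
qed

lemma sum_split_loss_le:
  fixes A :: "'b set" and len :: "'b \<Rightarrow> nat" and x :: "'b \<Rightarrow> real"
  assumes l: "lam > 0" and b: "b > 1" and d: "d = lam * ln b"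
    and fin: "finite A" and inj: "inj_on len A" and sp: "level_spaced d len x A"
  shows "(\<Sum>u\<in>A. split_loss lam d (x u)) \<le> (2 + 1 / (b - 1)) / lam"
proof (rule LIMSEQ_le_const)
  have "(\<lambda>n. 1 / real n / lam) \<longlonglongrightarrow> 0"
    by (intro tendsto_divide_zero lim_const_over_n)
  then have "(\<lambda>n. exp (1 / real n / lam)) \<longlonglongrightarrow> exp 0"
    by (rule tendsto_exp)
  then show "(\<lambda>n. (2 + exp (1 / real n / lam) / (b - 1)) / lam) \<longlonglongrightarrow> (2 + 1 / (b - 1)) / lam"
    using b l by (auto intro!: tendsto_divide tendsto_add)
  show "\<exists>N. \<forall>n\<ge>N. (\<Sum>u\<in>A. split_loss lam d (x u)) \<le> (2 + exp (1 / real n / lam) / (b - 1)) / lam"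
    using sum_split_loss_le_discretized[OF l b d _ fin inj sp] by (intro exI[of _ 1]) auto
qed

definition split_tree :: "nat \<Rightarrow> real \<Rightarrow> (nat list \<Rightarrow> real) \<Rightarrow> (nat list \<Rightarrow> real) \<Rightarrow> nat list set" where
  "split_tree b th B eta = {v \<in> cand_nodes b. \<forall>k < length v. th < B (take k v) + eta (take k v)}"

lemma privtree_output_eq_split_tree:
  "privtree_output b dm D th d eta = split_tree b th (biased_count dm D th d) eta"
  unfolding privtree_output_def split_tree_def by simp

definition full_tree :: "nat \<Rightarrow> nat list set \<Rightarrow> bool" where
  "full_tree b T \<longleftrightarrow> T \<subseteq> cand_nodes b \<and> [] \<in> T \<and> (\<forall>v\<in>T. \<forall>k\<le>length v. take k v \<in> T) \<and>
     (\<forall>u. \<forall>i<b. \<forall>j<b. (u @ [i] \<in> T) = (u @ [j] \<in> T))"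

lemma cand_nodes_take: "v \<in> cand_nodes b \<Longrightarrow> take k v \<in> cand_nodes b"
  unfolding cand_nodes_def using set_take_subset by fastforce

lemma cand_nodes_snoc [simp]: "u @ [i] \<in> cand_nodes b \<longleftrightarrow> u \<in> cand_nodes b \<and> i < b"
  unfolding cand_nodes_def by auto

lemma all_take_snoc:
  "(\<forall>k < length (u @ [i]). P (take k (u @ [i]))) \<longleftrightarrow> (\<forall>k < length u. P (take k u)) \<and> P u"
  by (auto simp: less_Suc_eq)

lemma split_tree_Nil [simp]: "[] \<in> split_tree b th B eta"
  unfolding split_tree_def cand_nodes_def by simp

lemma split_tree_snoc:
  "u @ [i] \<in> split_tree b th B eta \<longleftrightarrow> u \<in> split_tree b th B eta \<and> i < b \<and> th < B u + eta u"
  unfolding split_tree_def mem_Collect_eq all_take_snoc[where P = "\<lambda>v. th < B v + eta v"] by auto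

lemma full_tree_snoc:
  assumes "full_tree b T" and "0 < b"
  shows "u @ [i] \<in> T \<longleftrightarrow> u \<in> T \<and> i < b \<and> u @ [0] \<in> T"
proof -
  have sub: "T \<subseteq> cand_nodes b" and prefix: "\<forall>v\<in>T. \<forall>k\<le>length v. take k v \<in> T"
    and siblings: "\<forall>i<b. (u @ [i] \<in> T) = (u @ [0] \<in> T)"
    using assms unfolding full_tree_def by blast+
  have "u \<in> T \<and> i < b" if "u @ [i] \<in> T"
    using prefix[rule_format, OF that, of "length u"] sub that by auto
  then show ?thesis using siblings by blast
qed

lemma full_tree_split_tree: "full_tree b (split_tree b th B eta)"
proof -
  have "take k v \<in> split_tree b th B eta" if "v \<in> split_tree b th B eta" "k \<le> length v" for v k
    using that cand_nodes_take unfolding split_tree_def by (auto simp: min_def)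
  moreover have "split_tree b th B eta \<subseteq> cand_nodes b" unfolding split_tree_def by blast
  ultimately show ?thesis unfolding full_tree_def by (simp add: split_tree_snoc)
qed

lemma split_tree_eq_iff:
  assumes T: "full_tree b T" and b: "0 < b"
  shows "split_tree b th B eta = T \<longleftrightarrow> (\<forall>u\<in>T. th < B u + eta u \<longleftrightarrow> u @ [0] \<in> T)"
proof
  assume "split_tree b th B eta = T"
  then show "\<forall>u\<in>T. th < B u + eta u \<longleftrightarrow> u @ [0] \<in> T" using b by (auto simp: split_tree_snoc)
next
  assume decide: "\<forall>u\<in>T. th < B u + eta u \<longleftrightarrow> u @ [0] \<in> T"
  have "v \<in> split_tree b th B eta \<longleftrightarrow> v \<in> T" for v
  proof (induction v rule: rev_induct)
    case Nil
    then show ?case using T unfolding full_tree_def by simp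
  next
    case (snoc i w)
    have "w @ [i] \<in> split_tree b th B eta \<longleftrightarrow> w \<in> T \<and> i < b \<and> th < B w + eta w"
      using snoc.IH by (simp add: split_tree_snoc)
    also have "\<dots> \<longleftrightarrow> w \<in> T \<and> i < b \<and> w @ [0] \<in> T" using decide by blast
    also have "\<dots> \<longleftrightarrow> w @ [i] \<in> T" using full_tree_snoc[OF T b] by blast
    finally show ?case .
  qed
  then show "split_tree b th B eta = T" by blast
qed

definition decision_prob :: "real \<Rightarrow> real \<Rightarrow> (nat list \<Rightarrow> real) \<Rightarrow> nat list set \<Rightarrow> nat list \<Rightarrow> real" where
  "decision_prob lam th B T u =
     (if u @ [0] \<in> T then laplace_tail lam (th - B u) else 1 - laplace_tail lam (th - B u))"

lemma decision_prob_nonneg: "lam > 0 \<Longrightarrow> 0 \<le> decision_prob lam th B T u"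
  unfolding decision_prob_def using laplace_tail_pos[of lam] laplace_tail_less_1[of lam]
  by (auto simp: less_imp_le)

lemma decision_event_eq:
  fixes th c :: real
  shows "{y. th < c + y \<longleftrightarrow> P} = (if P then {th - c<..} else {..th - c})"
  by auto

lemma measure_laplace_decision_event:
  assumes "lam > 0"
  shows "measure (laplace lam) {y. th < c + y \<longleftrightarrow> P}
    = (if P then laplace_tail lam (th - c) else 1 - laplace_tail lam (th - c))"
  unfolding decision_event_eq using measure_laplace_greaterThan[OF assms] measure_laplace_atMost[OF assms]
  by simp

lemma finite_cand_nodes_length_less: "T \<subseteq> cand_nodes b \<Longrightarrow> finite {u \<in> T. length u < n}"
proof -
  assume "T \<subseteq> cand_nodes b"
  then have "{u \<in> T. length u < n} \<subseteq> {xs. set xs \<subseteq> {..<b} \<and> length xs \<le> n}"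
    unfolding cand_nodes_def by auto
  moreover have "finite {xs. set xs \<subseteq> {..<b} \<and> length xs \<le> n}"
    by (rule finite_lists_length_le) simp
  ultimately show ?thesis by (rule finite_subset)
qed

lemma space_noise_space [simp]: "space (noise_space lam) = UNIV"
  by (simp add: noise_space_def space_PiM)

text \<open>The event that the output is \<open>T\<close> is the decreasing intersection over \<open>n\<close> of the events
  that the split decisions at the nodes of \<open>T\<close> above depth \<open>n\<close> match \<open>T\<close>; these events are
  finite-dimensional cylinders, whose probabilities are products.\<close>
lemma prob_split_tree_limit:
  assumes l: "lam > 0" and T: "full_tree b T" and b: "0 < b"
  shows "(\<lambda>n. \<Prod>u\<in>{u\<in>T. length u < n}. decision_prob lam th B T u)
     \<longlonglongrightarrow> measure (noise_space lam) {eta \<in> space (noise_space lam). split_tree b th B eta = T}"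
proof -
  interpret L: prob_space "laplace lam" by (rule prob_space_laplace[OF l])
  interpret P: product_prob_space "\<lambda>_::nat list. laplace lam" "UNIV :: nat list set"
    by unfold_locales
  let ?M = "noise_space lam"
  let ?T = "\<lambda>n. {u\<in>T. length u < n}"
  let ?E = "\<lambda>u. {y. th < B u + y \<longleftrightarrow> u @ [0] \<in> T}"
  have M: "?M = PiM UNIV (\<lambda>_::nat list. laplace lam)" unfolding noise_space_def by simp
  have fin: "finite (?T n)" for n
    using T unfolding full_tree_def by (intro finite_cand_nodes_length_less) blast
  have sets_E: "?E u \<in> sets (laplace lam)" for u
    unfolding decision_event_eq by simp
  define A where "A n = {eta \<in> space ?M. \<forall>u\<in>?T n. eta u \<in> ?E u}" for n
  have measure_A: "measure ?M (A n) = (\<Prod>u\<in>?T n. decision_prob lam th B T u)" for n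
  proof -
    have "emeasure ?M (A n) = (\<Prod>u\<in>?T n. emeasure (laplace lam) (?E u))"
      unfolding A_def M by (rule P.emeasure_PiM_Collect) (use fin sets_E in auto)
    also have "\<dots> = (\<Prod>u\<in>?T n. ennreal (decision_prob lam th B T u))"
      using measure_laplace_decision_event[OF l]
      by (intro prod.cong) (simp_all add: L.emeasure_eq_measure decision_prob_def)
    also have "\<dots> = ennreal (\<Prod>u\<in>?T n. decision_prob lam th B T u)"
      by (rule prod_ennreal) (simp add: decision_prob_nonneg[OF l])
    finally show ?thesis unfolding measure_def
      by (simp add: prod_nonneg decision_prob_nonneg[OF l])
  qed
  interpret N: prob_space ?M unfolding M by (rule P.P.prob_space_axioms)
  have sets_A: "range A \<subseteq> sets ?M"
  proof -
    have "A n \<in> sets ?M" for n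
      unfolding A_def M using fin sets_E
      by (intro sets.sets_Collect_finite_All sets_Collect_single') auto
    then show ?thesis by blast
  qed
  have "decseq A" unfolding decseq_def A_def by auto
  then have "(\<lambda>n. measure ?M (A n)) \<longlonglongrightarrow> measure ?M (\<Inter>n. A n)"
    by (rule N.finite_Lim_measure_decseq[OF sets_A])
  moreover have "(\<Inter>n. A n) = {eta \<in> space ?M. split_tree b th B eta = T}"
    unfolding A_def split_tree_eq_iff[OF T b] by auto
  ultimately show ?thesis unfolding measure_A by simp
qed

lemma splitting_scheme_child_subset:
  assumes "splitting_scheme \<Omega> b dm" and "v \<in> cand_nodes b" and "i < b"
  shows "dm (v @ [i]) \<subseteq> dm v"
  using assms unfolding splitting_scheme_def by blast

lemma splitting_scheme_prefix_subset:
  assumes S: "splitting_scheme \<Omega> b dm"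
  shows "v \<in> cand_nodes b \<Longrightarrow> dm v \<subseteq> dm (take k v)"
proof (induction v arbitrary: k rule: rev_induct)
  case (snoc i w)
  then have "dm (w @ [i]) \<subseteq> dm w" by (intro splitting_scheme_child_subset[OF S]) auto
  then show ?case using snoc by (cases "k \<le> length w") auto
qed simp

lemma splitting_scheme_disjoint:
  assumes S: "splitting_scheme \<Omega> b dm"
  shows "u \<in> cand_nodes b \<Longrightarrow> v \<in> cand_nodes b \<Longrightarrow> length u = length v \<Longrightarrow> u \<noteq> v \<Longrightarrow>
         dm u \<inter> dm v = {}"
proof (induction u arbitrary: v rule: rev_induct)
  case (snoc i u')
  obtain v' j where v: "v = v' @ [j]"
    using snoc.prems(3) by (cases v rule: rev_exhaust) auto
  have u': "u' \<in> cand_nodes b" "i < b" and v': "v' \<in> cand_nodes b" "j < b"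
    using snoc.prems v by auto
  show ?case
  proof (cases "u' = v'")
    case True
    then show ?thesis using S u' v' snoc.prems(4) v unfolding splitting_scheme_def by auto
  next
    case False
    then have "dm u' \<inter> dm v' = {}" using snoc.IH u' v' snoc.prems(3) v by simp
    then show ?thesis
      using splitting_scheme_child_subset[OF S] u' v' v by blast
  qed
qed simp

lemma splitting_scheme_common_point_prefix:
  assumes S: "splitting_scheme \<Omega> b dm"
    and u: "u \<in> cand_nodes b" "x \<in> dm u" and v: "v \<in> cand_nodes b" "x \<in> dm v"
    and le: "length u \<le> length v"
  shows "u = take (length u) v"
proof (rule ccontr)
  assume "u \<noteq> take (length u) v"
  then have "dm u \<inter> dm (take (length u) v) = {}"
    using le by (intro splitting_scheme_disjoint[OF S u(1) cand_nodes_take[OF v(1)]]) auto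
  then show False using splitting_scheme_prefix_subset[OF S v(1)] u(2) v(2) by blast
qed

lemma splitting_scheme_inj_on_length:
  assumes S: "splitting_scheme \<Omega> b dm" and A: "A \<subseteq> cand_nodes b" "\<forall>u\<in>A. x \<in> dm u"
  shows "inj_on length A"
proof (rule inj_onI)
  fix u v assume "u \<in> A" "v \<in> A" "length u = length v"
  then show "u = v" using splitting_scheme_common_point_prefix[OF S, of u x v] A by auto
qed

lemma full_tree_leaf_unique:
  assumes S: "splitting_scheme \<Omega> b dm" and T: "full_tree b T" and b: "0 < b"
    and u: "u \<in> T" "x \<in> dm u" "u @ [0] \<notin> T" and v: "v \<in> T" "x \<in> dm v"
    and le: "length u \<le> length v"
  shows "u = v"
proof (rule ccontr)
  assume "u \<noteq> v"
  have sub: "T \<subseteq> cand_nodes b" and prefix: "\<forall>v\<in>T. \<forall>k\<le>length v. take k v \<in> T"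
    using T unfolding full_tree_def by blast+
  have "u = take (length u) v"
    using sub u v le by (intro splitting_scheme_common_point_prefix[OF S]) auto
  with \<open>u \<noteq> v\<close> le have lt: "length u < length v" by (cases "length u = length v") auto
  then have "take (Suc (length u)) v = u @ [v ! length u]"
    using \<open>u = take (length u) v\<close> by (simp add: take_Suc_conv_app_nth)
  moreover have "take (Suc (length u)) v \<in> T" using prefix v(1) lt by simp
  ultimately show False using full_tree_snoc[OF T b, of u "v ! length u"] u(3) by simp
qed

lemma node_count_add_mset:
  "node_count dm (add_mset x D) v = node_count dm D v + (if x \<in> dm v then 1 else 0)"
  unfolding node_count_def by simp

lemma node_count_mono: "dm v \<subseteq> dm u \<Longrightarrow> node_count dm D v \<le> node_count dm D u"
  unfolding node_count_def by (intro size_mset_mono filter_mset_mono_strong) auto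

definition count_surplus :: "(nat list \<Rightarrow> 'a set) \<Rightarrow> 'a multiset \<Rightarrow> real \<Rightarrow> real \<Rightarrow> nat list \<Rightarrow> real" where
  "count_surplus dm D th d u = real (node_count dm D u) + 1 - th - real (length u) * d"

lemma threshold_gap_biased_count:
  "th - biased_count dm D th d u = min d (1 - count_surplus dm D th d u)"
  unfolding biased_count_def count_surplus_def by (simp add: max_def min_def)

lemma threshold_gap_biased_count_add_mset:
  "x \<in> dm u \<Longrightarrow> th - biased_count dm (add_mset x D) th d u = min d (- count_surplus dm D th d u)"
  unfolding biased_count_def count_surplus_def node_count_add_mset by (simp add: max_def min_def)

lemma biased_count_add_mset_outside:
  "x \<notin> dm u \<Longrightarrow> biased_count dm (add_mset x D) th d u = biased_count dm D th d u"
  unfolding biased_count_def node_count_add_mset by simp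

lemma level_spaced_count_surplus:
  assumes S: "splitting_scheme \<Omega> b dm" and A: "A \<subseteq> cand_nodes b" "\<forall>u\<in>A. x \<in> dm u"
  shows "level_spaced d length (count_surplus dm D th d) A"
  unfolding level_spaced_def
proof (intro ballI impI)
  fix u v assume uv: "u \<in> A" "v \<in> A" and le: "length u \<le> length v"
  have "u = take (length u) v"
    using uv A le by (intro splitting_scheme_common_point_prefix[OF S]) auto
  then have "dm v \<subseteq> dm u" using splitting_scheme_prefix_subset[OF S] uv A by (metis subsetD)
  then have "real (node_count dm D v) \<le> real (node_count dm D u)" by (simp add: node_count_mono)
  then show "count_surplus dm D th d v + real (length v - length u) * d \<le> count_surplus dm D th d u"
    using le by (simp add: count_surplus_def of_nat_diff algebra_simps)
qed

lemma decision_prob_add_mset_le: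
  assumes l: "lam > 0" and x: "x \<in> dm u"
  shows "decision_prob lam th (biased_count dm (add_mset x D) th d) T u
    \<le> exp (split_loss lam d (count_surplus dm D th d u)) * decision_prob lam th (biased_count dm D th d) T u"
proof -
  define s where "s = count_surplus dm D th d u"
  let ?a = "min d (- s)" and ?b = "min d (1 - s)"
  have gap: "th - biased_count dm D th d u = ?b"
    unfolding s_def by (rule threshold_gap_biased_count)
  have gap': "th - biased_count dm (add_mset x D) th d u = ?a"
    unfolding s_def using x by (rule threshold_gap_biased_count_add_mset)
  have pos: "0 < laplace_tail lam ?a" "0 < laplace_tail lam ?b" using laplace_tail_pos[OF l] by auto
  have split: "laplace_tail lam ?a = exp (split_loss lam d s) * laplace_tail lam ?b"
    unfolding split_loss_def using pos by (simp add: exp_diff)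
  have stay: "1 - laplace_tail lam ?a \<le> exp (split_loss lam d s) * (1 - laplace_tail lam ?b)"
  proof -
    have "laplace_tail lam ?b \<le> laplace_tail lam ?a" by (rule laplace_tail_antimono[OF l]) auto
    moreover have "1 \<le> exp (split_loss lam d s)" using split_loss_nonneg[OF l] by simp
    moreover have "0 \<le> 1 - laplace_tail lam ?b" using laplace_tail_less_1[OF l, of ?b] by simp
    ultimately show ?thesis using mult_right_mono[of 1 "exp (split_loss lam d s)"] by fastforce
  qed
  show ?thesis
    using split stay unfolding decision_prob_def gap gap' s_def[symmetric] by simp
qed

lemma decision_prob_le_add_mset:
  assumes l: "lam > 0" and x: "x \<in> dm u"
  shows "decision_prob lam th (biased_count dm D th d) T u
    \<le> (if u @ [0] \<in> T then 1 else exp (1 / lam)) * decision_prob lam th (biased_count dm (add_mset x D) th d) T u"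
proof -
  define s where "s = count_surplus dm D th d u"
  let ?a = "min d (- s)" and ?b = "min d (1 - s)"
  have gap: "th - biased_count dm D th d u = ?b"
    unfolding s_def by (rule threshold_gap_biased_count)
  have gap': "th - biased_count dm (add_mset x D) th d u = ?a"
    unfolding s_def using x by (rule threshold_gap_biased_count_add_mset)
  have "laplace_tail lam ?b \<le> laplace_tail lam ?a" by (rule laplace_tail_antimono[OF l]) auto
  moreover have "1 - laplace_tail lam ?b \<le> exp (1 / lam) * (1 - laplace_tail lam ?a)"
    by (rule laplace_cdf_shift_le[OF l]) auto
  ultimately show ?thesis
    unfolding decision_prob_def gap gap' by simp
qed

lemma decision_prob_add_mset_outside:
  "x \<notin> dm u \<Longrightarrow> decision_prob lam th (biased_count dm (add_mset x D) th d) T u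
    = decision_prob lam th (biased_count dm D th d) T u"
  unfolding decision_prob_def by (simp add: biased_count_add_mset_outside)

lemma prod_le_mult_prod_if_agree_outside:
  fixes f g :: "'b \<Rightarrow> real"
  assumes "finite F" and "\<And>u. u \<in> F - P \<Longrightarrow> g u = f u" and "\<And>u. u \<in> F \<Longrightarrow> 0 \<le> f u"
    and "(\<Prod>u\<in>F \<inter> P. g u) \<le> c * (\<Prod>u\<in>F \<inter> P. f u)"
  shows "(\<Prod>u\<in>F. g u) \<le> c * (\<Prod>u\<in>F. f u)"
proof -
  have "(\<Prod>u\<in>F. g u) = (\<Prod>u\<in>F \<inter> P. g u) * (\<Prod>u\<in>F - P. f u)"
    using assms(1,2) by (simp add: prod.Int_Diff[of F g P])
  also have "\<dots> \<le> c * (\<Prod>u\<in>F \<inter> P. f u) * (\<Prod>u\<in>F - P. f u)"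
    using assms(3,4) by (intro mult_right_mono prod_nonneg) auto
  also have "\<dots> = c * (\<Prod>u\<in>F. f u)"
    using assms(1) by (simp add: prod.Int_Diff[of F f P])
  finally show ?thesis .
qed

lemma prod_decision_prob_add_mset_le:
  assumes S: "splitting_scheme \<Omega> b dm" and l: "lam > 0" and d: "d = lam * ln (real b)"
    and F: "finite F" "F \<subseteq> cand_nodes b"
  shows "(\<Prod>u\<in>F. decision_prob lam th (biased_count dm (add_mset x D) th d) T u)
    \<le> exp ((2 + 1 / (real b - 1)) / lam) * (\<Prod>u\<in>F. decision_prob lam th (biased_count dm D th d) T u)"
proof (rule prod_le_mult_prod_if_agree_outside[where P = "{u. x \<in> dm u}"])
  let ?m = "decision_prob lam th (biased_count dm D th d) T"
  let ?m' = "decision_prob lam th (biased_count dm (add_mset x D) th d) T"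
  let ?s = "count_surplus dm D th d"
  let ?A = "F \<inter> {u. x \<in> dm u}"
  have b: "real b > 1" using S unfolding splitting_scheme_def by simp
  have A: "finite ?A" "?A \<subseteq> cand_nodes b" "\<forall>u\<in>?A. x \<in> dm u" using F by auto
  have "(\<Prod>u\<in>?A. ?m' u) \<le> (\<Prod>u\<in>?A. exp (split_loss lam d (?s u)) * ?m u)"
  proof (rule prod_mono)
    fix u assume "u \<in> ?A"
    then show "0 \<le> ?m' u \<and> ?m' u \<le> exp (split_loss lam d (?s u)) * ?m u"
      using decision_prob_nonneg[OF l] decision_prob_add_mset_le[OF l, of x dm u th D d T] by auto
  qed
  also have "\<dots> = exp (\<Sum>u\<in>?A. split_loss lam d (?s u)) * (\<Prod>u\<in>?A. ?m u)"
    using A(1) by (simp add: prod.distrib exp_sum)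
  also have "\<dots> \<le> exp ((2 + 1 / (real b - 1)) / lam) * (\<Prod>u\<in>?A. ?m u)"
    using sum_split_loss_le[OF l b d A(1) splitting_scheme_inj_on_length[OF S A(2,3)]
        level_spaced_count_surplus[OF S A(2,3)]] decision_prob_nonneg[OF l]
    by (intro mult_right_mono prod_nonneg) auto
  finally show "(\<Prod>u\<in>?A. ?m' u) \<le> exp ((2 + 1 / (real b - 1)) / lam) * (\<Prod>u\<in>?A. ?m u)" .
qed (auto simp: decision_prob_add_mset_outside decision_prob_nonneg[OF l] F)

lemma prod_decision_prob_le_add_mset:
  assumes S: "splitting_scheme \<Omega> b dm" and l: "lam > 0" and T: "full_tree b T"
    and F: "finite F" "F \<subseteq> T"
  shows "(\<Prod>u\<in>F. decision_prob lam th (biased_count dm D th d) T u)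
    \<le> exp (1 / lam) * (\<Prod>u\<in>F. decision_prob lam th (biased_count dm (add_mset x D) th d) T u)"
proof (rule prod_le_mult_prod_if_agree_outside[where P = "{u. x \<in> dm u}"])
  let ?m = "decision_prob lam th (biased_count dm D th d) T"
  let ?m' = "decision_prob lam th (biased_count dm (add_mset x D) th d) T"
  let ?f = "\<lambda>u. if u @ [0] \<in> T then 1 else exp (1 / lam)"
  let ?A = "F \<inter> {u. x \<in> dm u}"
  let ?L = "?A \<inter> - {u. u @ [0] \<in> T}"
  have b: "0 < b" using S unfolding splitting_scheme_def by simp
  have leaves: "card ?L \<le> 1"
  proof -
    have "p = q" if "p \<in> ?L" "q \<in> ?L" for p q
      using that F full_tree_leaf_unique[OF S T b, of p x q] full_tree_leaf_unique[OF S T b, of q x p]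
      by (cases "length p \<le> length q") auto
    then show ?thesis using F(1) by (simp add: card_le_Suc0_iff_eq)
  qed
  have "(\<Prod>u\<in>?A. ?m u) \<le> (\<Prod>u\<in>?A. ?f u * ?m' u)"
  proof (rule prod_mono)
    fix u assume "u \<in> ?A"
    then show "0 \<le> ?m u \<and> ?m u \<le> ?f u * ?m' u"
      using decision_prob_nonneg[OF l] decision_prob_le_add_mset[OF l, of x dm u th D d T] by auto
  qed
  also have "\<dots> = exp (1 / lam) ^ card ?L * (\<Prod>u\<in>?A. ?m' u)"
    using F(1) by (simp add: prod.distrib prod.If_cases)
  also have "\<dots> \<le> exp (1 / lam) ^ 1 * (\<Prod>u\<in>?A. ?m' u)"
    using leaves l decision_prob_nonneg[OF l]
    by (intro mult_right_mono power_increasing prod_nonneg) auto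
  finally show "(\<Prod>u\<in>?A. ?m u) \<le> exp (1 / lam) * (\<Prod>u\<in>?A. ?m' u)" by simp
qed (auto simp: decision_prob_add_mset_outside decision_prob_nonneg[OF l] F)

lemma privtree_prob_not_full_tree:
  assumes "\<not> full_tree b T"
  shows "privtree_prob b dm D lam th d T = 0"
proof -
  have "{eta \<in> space (noise_space lam). split_tree b th (biased_count dm D th d) eta = T} = {}"
    using full_tree_split_tree assms by blast
  then show ?thesis unfolding privtree_prob_def privtree_output_eq_split_tree by simp
qed

lemma privtree_prob_limit:
  assumes "lam > 0" and "0 < b" and "full_tree b T"
  shows "(\<lambda>n. \<Prod>u\<in>{u\<in>T. length u < n}. decision_prob lam th (biased_count dm D th d) T u)
    \<longlonglongrightarrow> privtree_prob b dm D lam th d T"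
  unfolding privtree_prob_def privtree_output_eq_split_tree
  using prob_split_tree_limit[OF assms(1,3,2)] by simp

lemma privtree_prob_le_if_prod_le:
  assumes l: "lam > 0" and b: "0 < b"
    and prod_le: "\<And>n. full_tree b T \<Longrightarrow>
      (\<Prod>u\<in>{u\<in>T. length u < n}. decision_prob lam th (biased_count dm D' th d) T u)
        \<le> c * (\<Prod>u\<in>{u\<in>T. length u < n}. decision_prob lam th (biased_count dm D th d) T u)"
  shows "privtree_prob b dm D' lam th d T \<le> c * privtree_prob b dm D lam th d T"
proof (cases "full_tree b T")
  case True
  show ?thesis
    using prod_le[OF True]
    by (intro LIMSEQ_le[OF privtree_prob_limit[OF l b True]
          tendsto_mult_left[OF privtree_prob_limit[OF l b True]]]) auto
qed (simp add: privtree_prob_not_full_tree)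

lemma privtree_prob_add_mset_le:
  assumes S: "splitting_scheme \<Omega> b dm" and l: "lam > 0" and d: "d = lam * ln (real b)"
  shows "privtree_prob b dm (add_mset x D) lam th d T
    \<le> exp ((2 + 1 / (real b - 1)) / lam) * privtree_prob b dm D lam th d T"
proof (rule privtree_prob_le_if_prod_le[OF l])
  show "0 < b" using S unfolding splitting_scheme_def by simp
  fix n assume "full_tree b T"
  then have sub: "T \<subseteq> cand_nodes b" unfolding full_tree_def by blast
  show "(\<Prod>u\<in>{u\<in>T. length u < n}. decision_prob lam th (biased_count dm (add_mset x D) th d) T u)
      \<le> exp ((2 + 1 / (real b - 1)) / lam)
        * (\<Prod>u\<in>{u\<in>T. length u < n}. decision_prob lam th (biased_count dm D th d) T u)"
    using finite_cand_nodes_length_less[OF sub] sub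
    by (intro prod_decision_prob_add_mset_le[OF S l d]) auto
qed

lemma privtree_prob_le_add_mset:
  assumes S: "splitting_scheme \<Omega> b dm" and l: "lam > 0"
  shows "privtree_prob b dm D lam th d T \<le> exp (1 / lam) * privtree_prob b dm (add_mset x D) lam th d T"
proof (rule privtree_prob_le_if_prod_le[OF l])
  show "0 < b" using S unfolding splitting_scheme_def by simp
  fix n assume T: "full_tree b T"
  then have "finite {u\<in>T. length u < n}"
    unfolding full_tree_def by (intro finite_cand_nodes_length_less) blast
  then show "(\<Prod>u\<in>{u\<in>T. length u < n}. decision_prob lam th (biased_count dm D th d) T u)
      \<le> exp (1 / lam)
        * (\<Prod>u\<in>{u\<in>T. length u < n}. decision_prob lam th (biased_count dm (add_mset x D) th d) T u)"
    by (intro prod_decision_prob_le_add_mset[OF S l T]) auto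
qed

theorem corollary1:
  fixes \<Omega> :: "'a set" and \<beta> :: nat and dm :: "nat list \<Rightarrow> 'a set"
    and \<epsilon> lam \<theta> \<delta> :: real
  assumes scheme: "splitting_scheme \<Omega> \<beta> dm"
    and eps: "\<epsilon> > 0"
    and lam: "lam \<ge> (2 * real \<beta> - 1) / (real \<beta> - 1) * (1 / \<epsilon>)"
    and delta: "\<delta> = lam * ln (real \<beta>)"
  shows "\<forall>D x T. set_mset D \<subseteq> \<Omega> \<longrightarrow> x \<in> \<Omega> \<longrightarrow>
           privtree_prob \<beta> dm (add_mset x D) lam \<theta> \<delta> T
             \<le> exp \<epsilon> * privtree_prob \<beta> dm D lam \<theta> \<delta> T \<and>
           privtree_prob \<beta> dm D lam \<theta> \<delta> T
             \<le> exp \<epsilon> * privtree_prob \<beta> dm (add_mset x D) lam \<theta> \<delta> T"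
proof (intro allI impI conjI)
  fix D x T
  let ?p = "privtree_prob \<beta> dm D lam \<theta> \<delta> T"
  let ?p' = "privtree_prob \<beta> dm (add_mset x D) lam \<theta> \<delta> T"
  have \<beta>: "real \<beta> \<ge> 2" using scheme unfolding splitting_scheme_def by simp
  have K: "(2 * real \<beta> - 1) / (real \<beta> - 1) = 2 + 1 / (real \<beta> - 1)"
    using \<beta> by (simp add: field_simps)
  have "0 < 2 + 1 / (real \<beta> - 1)" using \<beta> by (intro add_pos_nonneg) auto
  then have "0 < (2 + 1 / (real \<beta> - 1)) * (1 / \<epsilon>)" using eps by simp
  then have l: "lam > 0" using lam unfolding K by linarith
  have loss: "(2 + 1 / (real \<beta> - 1)) / lam \<le> \<epsilon>"
    using lam l eps unfolding K by (simp add: field_simps)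
  have "1 / lam \<le> (2 + 1 / (real \<beta> - 1)) / lam" using l \<beta> by (intro divide_right_mono) auto
  then have leaf_loss: "1 / lam \<le> \<epsilon>" using loss by linarith
  have "?p' \<le> exp ((2 + 1 / (real \<beta> - 1)) / lam) * ?p"
    by (rule privtree_prob_add_mset_le[OF scheme l delta])
  also have "\<dots> \<le> exp \<epsilon> * ?p" using loss by (intro mult_right_mono) (auto simp: privtree_prob_def)
  finally show "?p' \<le> exp \<epsilon> * ?p" .
  have "?p \<le> exp (1 / lam) * ?p'" by (rule privtree_prob_le_add_mset[OF scheme l])
  also have "\<dots> \<le> exp \<epsilon> * ?p'" using leaf_loss by (intro mult_right_mono) (auto simp: privtree_prob_def)
  finally show "?p \<le> exp \<epsilon> * ?p'" .
qed

end
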